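(* Let $Y=(\ell_2,|||\cdot|||)$ be the renorming of $\ell_2$ described in the context. Then $e_1$ and $e_1+e_n$ ($n\ge2$) are extreme points of $B_Y$, and $e_1^*$ and $e_1^*-2e_n^*$ ($n\ge2$) are extreme points of $B_{Y^*}$.
   Context: Let $(e_n)$ be the unit vector basis of $\ell_2$ and $(e_n^* )$ the biorthogonal functionals (identified with elements of $\ell_2$ via the standard duality). Define an equivalent norm $\|\cdot\|$ on $\ell_2$ whose unit ball is the $\|\cdot\|_2$-closed convex hull of $B_{\ell_2}\cup\{\pm(e_1+e_n):n\ge2\}$. For $x=\sum_n x_ne_n$ put $|||x|||=\max\{\|x\|,\sup_{n\ge2}|x_1-2x_n|\}$ and $Y=(\ell_2,|||\cdot|||)$; $Y^*$ carries the dual norm. *)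

theory Defs
  imports "HOL-Analysis.Analysis"
begin

text \<open>Sequences are indexed by nat; coordinate 0 is unused (forced to 0) so that
  the unit vectors e 1, e 2, ... match the paper's indexing.\<close>

definition ell2 :: "(nat \<Rightarrow> real) set" where
  "ell2 = {x. x 0 = 0 \<and> summable (\<lambda>n. (x n)\<^sup>2)}"

definition l2norm :: "(nat \<Rightarrow> real) \<Rightarrow> real" where
  "l2norm x = sqrt (\<Sum>n. (x n)\<^sup>2)"

definition unitvec :: "nat \<Rightarrow> nat \<Rightarrow> real" ("e") where
  "e n = (\<lambda>j. if j = n then 1 else 0)"

definition pairing :: "(nat \<Rightarrow> real) \<Rightarrow> (nat \<Rightarrow> real) \<Rightarrow> real" where
  "pairing y x = (\<Sum>n. y n * x n)"

definition seq_convex_hull :: "(nat \<Rightarrow> real) set \<Rightarrow> (nat \<Rightarrow> real) set" where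
  "seq_convex_hull S = {x. \<exists>(k::nat) (c::nat \<Rightarrow> real) (p::nat \<Rightarrow> nat \<Rightarrow> real).
      (\<forall>i<k. 0 \<le> c i \<and> p i \<in> S) \<and> (\<Sum>i<k. c i) = 1 \<and>
      x = (\<lambda>j. \<Sum>i<k. c i * p i j)}"

definition l2_closure :: "(nat \<Rightarrow> real) set \<Rightarrow> (nat \<Rightarrow> real) set" where
  "l2_closure S = {x \<in> ell2. \<forall>\<epsilon>>0. \<exists>y\<in>S. l2norm (\<lambda>j. x j - y j) < \<epsilon>}"

definition B_ell2 :: "(nat \<Rightarrow> real) set" where
  "B_ell2 = {x \<in> ell2. l2norm x \<le> 1}"

definition Kball :: "(nat \<Rightarrow> real) set" where
  "Kball = l2_closure (seq_convex_hull (B_ell2 \<union>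
     {(\<lambda>j. s * (e 1 j + e n j)) | s n. s \<in> {1, -1} \<and> n \<ge> 2}))"

definition knorm :: "(nat \<Rightarrow> real) \<Rightarrow> real" where
  "knorm x = Inf {t. t > 0 \<and> (\<lambda>j. x j / t) \<in> Kball}"

definition ynorm :: "(nat \<Rightarrow> real) \<Rightarrow> real" where
  "ynorm x = max (knorm x) (SUP n\<in>{2..}. \<bar>x 1 - 2 * x n\<bar>)"

definition B_Y :: "(nat \<Rightarrow> real) set" where
  "B_Y = {x \<in> ell2. ynorm x \<le> 1}"

text \<open>Dual norm, with Y* identified with ell2 via the standard duality.\<close>
definition ydualnorm :: "(nat \<Rightarrow> real) \<Rightarrow> real" where
  "ydualnorm y = (SUP x\<in>B_Y. pairing y x)"

definition B_Ydual :: "(nat \<Rightarrow> real) set" where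
  "B_Ydual = {y \<in> ell2. ydualnorm y \<le> 1}"

definition is_extreme_point :: "(nat \<Rightarrow> real) \<Rightarrow> (nat \<Rightarrow> real) set \<Rightarrow> bool" where
  "is_extreme_point x S \<longleftrightarrow> x \<in> S \<and>
     \<not> (\<exists>a\<in>S. \<exists>b\<in>S. a \<noteq> b \<and> (\<exists>t. 0 < t \<and> t < 1 \<and> x = (\<lambda>j. (1 - t) * a j + t * b j)))"

end

theory Submission
  imports Defs
begin

text \<open>Every x in B_Y satisfies x 1 \<le> 1 and |x 1 - 2 x n| \<le> 1 for n \<ge> 2, so on the face
  x 1 = 1 all further coordinates lie in [0, 1]; a point of that face whose coordinates are
  vertices of these intervals cannot be a proper convex combination. Dually, testing a
  functional y in B_Y* against e 1, e 1 + e n and -e n / 2, which all lie in B_Y, gives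
  y 1 \<le> 1, y 1 + y n \<le> 1 and y n \<ge> -2, so on the face y 1 = 1 the coordinates lie in
  [-2, 0] and the same argument applies. The only analytic input is that B_Y is bounded in
  ell2, which makes the supremum defining the dual norm finite.\<close>

lemma convex_comb_eq_upper_bound:
  fixes u v c t :: real
  assumes "u \<le> c" "v \<le> c" "0 < t" "t < 1" "(1 - t) * u + t * v = c"
  shows "u = c \<and> v = c"
proof -
  have "(1 - t) * (c - u) + t * (c - v) = 0" using assms(5) by (simp add: algebra_simps)
  moreover have "(1 - t) * (c - u) \<ge> 0" "t * (c - v) \<ge> 0" using assms by auto
  ultimately have "(1 - t) * (c - u) = 0" "t * (c - v) = 0" by linarith+
  then show ?thesis using assms by auto
qed

lemma convex_comb_eq_lower_bound:
  fixes u v c t :: real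
  assumes "c \<le> u" "c \<le> v" "0 < t" "t < 1" "(1 - t) * u + t * v = c"
  shows "u = c \<and> v = c"
  using convex_comb_eq_upper_bound[of "-u" "-c" "-v" t] assms by (simp add: algebra_simps)

lemma is_extreme_point_coordinate_face:
  assumes x: "x \<in> S"
    and top: "\<And>a. a \<in> S \<Longrightarrow> a k \<le> x k"
    and box: "\<And>a j. a \<in> S \<Longrightarrow> a k = x k \<Longrightarrow> j \<noteq> k \<Longrightarrow> lo j \<le> a j \<and> a j \<le> hi j"
    and vertex: "\<And>j. j \<noteq> k \<Longrightarrow> x j = lo j \<or> x j = hi j"
  shows "is_extreme_point x S"
  unfolding is_extreme_point_def
proof (intro conjI x notI)
  assume "\<exists>a\<in>S. \<exists>b\<in>S. a \<noteq> b \<and> (\<exists>t. 0 < t \<and> t < 1 \<and> x = (\<lambda>j. (1 - t) * a j + t * b j))"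
  then obtain a b t where ab: "a \<in> S" "b \<in> S" "a \<noteq> b" and t: "0 < t" "t < 1"
    and comb: "\<And>j. (1 - t) * a j + t * b j = x j"
    by (metis (no_types, lifting))
  have k: "a k = x k" "b k = x k"
    using convex_comb_eq_upper_bound[OF top[OF ab(1)] top[OF ab(2)] t comb] by auto
  have "a j = b j" for j
  proof (cases "j = k")
    case False
    have "lo j \<le> a j" "a j \<le> hi j" "lo j \<le> b j" "b j \<le> hi j"
      using box[OF ab(1) k(1) False] box[OF ab(2) k(2) False] by auto
    with vertex[OF False] comb[of j] t show ?thesis
      using convex_comb_eq_lower_bound[of "lo j" "a j" "b j" t]
        convex_comb_eq_upper_bound[of "a j" "hi j" "b j" t] by auto
  qed (use k in simp)
  then show False using ab(3) by auto
qed

lemma summable_square_finite_support: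
  fixes x :: "nat \<Rightarrow> real"
  assumes "finite F" "\<And>j. j \<notin> F \<Longrightarrow> x j = 0"
  shows "summable (\<lambda>j. (x j)\<^sup>2)" "(\<Sum>j. (x j)\<^sup>2) = (\<Sum>j\<in>F. (x j)\<^sup>2)"
  using summable_finite[OF assms(1), of "\<lambda>j. (x j)\<^sup>2"] suminf_finite[OF assms(1), of "\<lambda>j. (x j)\<^sup>2"]
    assms(2) by auto

lemma ell2_finite_support:
  assumes "x 0 = 0" "finite F" "\<And>j. j \<notin> F \<Longrightarrow> x j = 0"
  shows "x \<in> ell2"
  using summable_square_finite_support[OF assms(2,3)] assms(1) by (simp add: ell2_def)

lemma pairing_finite_support:
  assumes "finite F" "\<And>j. j \<notin> F \<Longrightarrow> y j * x j = 0"
  shows "pairing y x = (\<Sum>j\<in>F. y j * x j)"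
  unfolding pairing_def by (rule suminf_finite) (use assms in auto)

lemma summable_square_imp_LIMSEQ_zero:
  fixes x :: "nat \<Rightarrow> real"
  assumes "summable (\<lambda>n. (x n)\<^sup>2)"
  shows "x \<longlonglongrightarrow> 0"
proof -
  have "(\<lambda>n. sqrt ((x n)\<^sup>2)) \<longlonglongrightarrow> sqrt 0"
    by (rule tendsto_real_sqrt) (rule summable_LIMSEQ_zero[OF assms])
  then have "(\<lambda>n. \<bar>x n\<bar>) \<longlonglongrightarrow> 0" by simp
  then show ?thesis by (rule tendsto_rabs_zero_cancel)
qed

lemma sum_squares_add_le:
  fixes x y :: "nat \<Rightarrow> real"
  assumes x: "summable (\<lambda>j. (x j)\<^sup>2)" and y: "summable (\<lambda>j. (y j)\<^sup>2)"
  shows "summable (\<lambda>j. (x j + y j)\<^sup>2)"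
    "(\<Sum>j. (x j + y j)\<^sup>2) \<le> 2 * (\<Sum>j. (x j)\<^sup>2) + 2 * (\<Sum>j. (y j)\<^sup>2)"
proof -
  have le: "(x j + y j)\<^sup>2 \<le> 2 * (x j)\<^sup>2 + 2 * (y j)\<^sup>2" for j
    using sum_squares_ge_zero[of "x j - y j" 0] by (simp add: power2_eq_square algebra_simps)
  have bound: "summable (\<lambda>j. 2 * (x j)\<^sup>2 + 2 * (y j)\<^sup>2)"
    by (intro summable_add summable_mult x y)
  show sum: "summable (\<lambda>j. (x j + y j)\<^sup>2)"
    by (rule summable_comparison_test'[OF bound, of 0]) (simp add: le)
  have "(\<Sum>j. (x j + y j)\<^sup>2) \<le> (\<Sum>j. 2 * (x j)\<^sup>2 + 2 * (y j)\<^sup>2)"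
    by (rule suminf_le[OF le sum bound])
  also have "\<dots> = 2 * (\<Sum>j. (x j)\<^sup>2) + 2 * (\<Sum>j. (y j)\<^sup>2)"
    using x y by (simp add: suminf_add[symmetric] suminf_mult summable_mult)
  finally show "(\<Sum>j. (x j + y j)\<^sup>2) \<le> 2 * (\<Sum>j. (x j)\<^sup>2) + 2 * (\<Sum>j. (y j)\<^sup>2)" .
qed

lemma pairing_le_half_sum_squares:
  assumes a: "summable (\<lambda>j. (a j)\<^sup>2)" and x: "summable (\<lambda>j. (x j)\<^sup>2)"
  shows "pairing a x \<le> ((\<Sum>j. (a j)\<^sup>2) + (\<Sum>j. (x j)\<^sup>2)) / 2"
proof -
  have le: "\<bar>a j * x j\<bar> \<le> ((a j)\<^sup>2 + (x j)\<^sup>2) / 2" for j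
    using sum_squares_ge_zero[of "\<bar>a j\<bar> - \<bar>x j\<bar>" 0]
    by (simp add: power2_eq_square algebra_simps abs_mult)
  have bound: "summable (\<lambda>j. ((a j)\<^sup>2 + (x j)\<^sup>2) / 2)"
    by (intro summable_divide summable_add a x)
  have "summable (\<lambda>j. a j * x j)"
    by (rule summable_comparison_test'[OF bound, of 0]) (simp only: real_norm_def le)
  then have "pairing a x \<le> (\<Sum>j. ((a j)\<^sup>2 + (x j)\<^sup>2) / 2)"
    unfolding pairing_def by (rule suminf_le[rotated]) (use bound le abs_ge_self order_trans in blast)+
  also have "\<dots> = ((\<Sum>j. (a j)\<^sup>2) + (\<Sum>j. (x j)\<^sup>2)) / 2"
    using suminf_divide[OF summable_add[OF a x], of 2] suminf_add[OF a x] by simp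
  finally show ?thesis .
qed

lemma sum_squares_convex_combination_le:
  fixes c :: "nat \<Rightarrow> real" and p :: "nat \<Rightarrow> nat \<Rightarrow> real"
  assumes c: "\<And>i. i < k \<Longrightarrow> 0 \<le> c i" "(\<Sum>i<k. c i) = 1"
    and p: "\<And>i. i < k \<Longrightarrow> summable (\<lambda>j. (p i j)\<^sup>2) \<and> (\<Sum>j. (p i j)\<^sup>2) \<le> C"
  shows "summable (\<lambda>j. (\<Sum>i<k. c i * p i j)\<^sup>2) \<and> (\<Sum>j. (\<Sum>i<k. c i * p i j)\<^sup>2) \<le> C"
proof -
  have "{..<k} \<noteq> {}" using c(2) by auto
  then have jensen: "(\<Sum>i<k. c i * p i j)\<^sup>2 \<le> (\<Sum>i<k. c i * (p i j)\<^sup>2)" for j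
    using convex_on_sum[OF _ _ convex_power2, of "{..<k}" c "\<lambda>i. p i j"] c by simp
  have summands: "summable (\<lambda>j. c i * (p i j)\<^sup>2)" if "i \<in> {..<k}" for i
    using summable_mult[of "\<lambda>j. (p i j)\<^sup>2" "c i"] p that by simp
  have bound: "summable (\<lambda>j. \<Sum>i<k. c i * (p i j)\<^sup>2)"
    by (rule summable_sum) (rule summands)
  have sum: "summable (\<lambda>j. (\<Sum>i<k. c i * p i j)\<^sup>2)"
    by (rule summable_comparison_test'[OF bound, of 0]) (simp add: jensen)
  have "(\<Sum>j. (\<Sum>i<k. c i * p i j)\<^sup>2) \<le> (\<Sum>j. \<Sum>i<k. c i * (p i j)\<^sup>2)"
    by (rule suminf_le[OF jensen sum bound])
  also have "\<dots> = (\<Sum>i<k. \<Sum>j. c i * (p i j)\<^sup>2)"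
    by (rule suminf_sum) (rule summands)
  also have "\<dots> = (\<Sum>i<k. c i * (\<Sum>j. (p i j)\<^sup>2))"
    by (rule sum.cong) (simp_all add: suminf_mult p)
  also have "\<dots> \<le> (\<Sum>i<k. c i * C)"
    by (rule sum_mono) (simp add: c p mult_left_mono)
  also have "\<dots> = C" using c(2) by (simp add: sum_distrib_right[symmetric])
  finally show ?thesis using sum by simp
qed

lemma seq_convex_hull_sum_squares_le:
  assumes S: "\<And>p. p \<in> S \<Longrightarrow> summable (\<lambda>j. (p j)\<^sup>2) \<and> (\<Sum>j. (p j)\<^sup>2) \<le> C"
    and x: "x \<in> seq_convex_hull S"
  shows "summable (\<lambda>j. (x j)\<^sup>2) \<and> (\<Sum>j. (x j)\<^sup>2) \<le> C"
proof -
  obtain k :: nat and c :: "nat \<Rightarrow> real" and p :: "nat \<Rightarrow> nat \<Rightarrow> real" where cp: "\<forall>i<k. 0 \<le> c i \<and> p i \<in> S" "(\<Sum>i<k. c i) = 1"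
    and x_eq: "x = (\<lambda>j. \<Sum>i<k. c i * p i j)"
    using x unfolding seq_convex_hull_def by blast
  show ?thesis
    unfolding x_eq by (rule sum_squares_convex_combination_le) (use cp S in auto)
qed

lemma l2_closure_sum_squares_le:
  assumes S: "\<And>y. y \<in> S \<Longrightarrow> summable (\<lambda>j. (y j)\<^sup>2) \<and> (\<Sum>j. (y j)\<^sup>2) \<le> C"
    and x: "x \<in> l2_closure S"
  shows "(\<Sum>j. (x j)\<^sup>2) \<le> 2 * C + 2"
proof -
  have "x \<in> ell2" and approx: "\<forall>\<epsilon>>0. \<exists>y\<in>S. l2norm (\<lambda>j. x j - y j) < \<epsilon>"
    using x by (auto simp: l2_closure_def)
  then have sx: "summable (\<lambda>j. (x j)\<^sup>2)" by (simp add: ell2_def)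
  obtain y where y: "y \<in> S" and close: "l2norm (\<lambda>j. x j - y j) < 1"
    using approx zero_less_one by blast
  have sy: "summable (\<lambda>j. (y j)\<^sup>2)" and Cy: "(\<Sum>j. (y j)\<^sup>2) \<le> C" using S[OF y] by auto
  have "summable (\<lambda>j. (x j + - y j)\<^sup>2)" using sum_squares_add_le(1)[of x "\<lambda>j. - y j"] sx sy by simp
  then have sd: "summable (\<lambda>j. (x j - y j)\<^sup>2)" by simp
  have d: "(\<Sum>j. (x j - y j)\<^sup>2) < 1" using close by (simp add: l2norm_def)
  have "(\<Sum>j. (y j + (x j - y j))\<^sup>2) \<le> 2 * (\<Sum>j. (y j)\<^sup>2) + 2 * (\<Sum>j. (x j - y j)\<^sup>2)"
    by (rule sum_squares_add_le(2)[OF sy sd])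
  then show ?thesis using Cy d by simp
qed

lemma mem_l2_closure_seq_convex_hull:
  assumes "z \<in> S" "z \<in> ell2"
  shows "z \<in> l2_closure (seq_convex_hull S)"
proof -
  have "z \<in> seq_convex_hull S"
    unfolding seq_convex_hull_def using assms(1)
    by (intro CollectI exI[of _ 1] exI[of _ "\<lambda>_. 1"] exI[of _ "\<lambda>_. z"]) auto
  moreover have "l2norm (\<lambda>j. z j - z j) = 0" by (simp add: l2norm_def)
  ultimately show ?thesis unfolding l2_closure_def using assms(2) by force
qed

lemma Kball_generator_sum_squares_le:
  assumes "p \<in> B_ell2 \<union> {(\<lambda>j. s * (e 1 j + e n j)) | s n. s \<in> {1, -1} \<and> n \<ge> 2}"
  shows "summable (\<lambda>j. (p j)\<^sup>2) \<and> (\<Sum>j. (p j)\<^sup>2) \<le> 2"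
  using assms
proof
  assume "p \<in> B_ell2"
  then show ?thesis by (auto simp: B_ell2_def ell2_def l2norm_def)
next
  assume "p \<in> {(\<lambda>j. s * (e 1 j + e n j)) | s n. s \<in> {1, -1} \<and> n \<ge> 2}"
  then obtain s n where p: "p = (\<lambda>j. s * (e 1 j + e n j))" and sn: "s \<in> {1, -1}" "n \<ge> 2"
    by blast
  have "p j = 0" if "j \<notin> {1, n}" for j using that by (simp add: p unitvec_def)
  then show ?thesis
    using summable_square_finite_support[of "{1, n}" p] sn by (auto simp: p unitvec_def)
qed

lemma Kball_sum_squares_le:
  assumes "x \<in> Kball"
  shows "(\<Sum>j. (x j)\<^sup>2) \<le> 6"
proof -
  have "(\<Sum>j. (x j)\<^sup>2) \<le> 2 * 2 + 2"
    by (rule l2_closure_sum_squares_le[OF _ assms[unfolded Kball_def]])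
      (erule seq_convex_hull_sum_squares_le[rotated], erule Kball_generator_sum_squares_le)
  then show ?thesis by simp
qed

lemma knorm_le_one:
  assumes "x \<in> Kball"
  shows "knorm x \<le> 1"
  unfolding knorm_def by (rule cInf_lower) (use assms in \<open>auto intro: bdd_belowI[of _ 0]\<close>)

lemma mem_Kball:
  assumes "x \<in> ell2" "l2norm x \<le> 1"
  shows "x \<in> Kball"
  unfolding Kball_def using assms by (intro mem_l2_closure_seq_convex_hull) (auto simp: B_ell2_def)

text \<open>Some x / t with t < 2 lies in Kball, hence the bound 24 = 6 * 2 * 2.\<close>

lemma knorm_le_one_sum_squares_le:
  assumes x: "x \<in> ell2" and knorm: "knorm x \<le> 1"
  shows "(\<Sum>j. (x j)\<^sup>2) \<le> 24"
proof -
  define Q where "Q = (\<Sum>j. (x j)\<^sup>2)"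
  have sx: "summable (\<lambda>j. (x j)\<^sup>2)" using x by (simp add: ell2_def)
  have "0 \<le> Q" unfolding Q_def by (rule suminf_nonneg[OF sx]) simp
  have scale: "summable (\<lambda>j. (x j / t)\<^sup>2) \<and> (\<Sum>j. (x j / t)\<^sup>2) = Q / t\<^sup>2" for t
    using sx by (simp add: power_divide summable_divide suminf_divide Q_def)
  define T where "T = {t. t > 0 \<and> (\<lambda>j. x j / t) \<in> Kball}"
  have "Q + 1 \<in> T"
  proof -
    have "Q \<le> (Q + 1)\<^sup>2" using \<open>0 \<le> Q\<close> by (simp add: power2_eq_square algebra_simps)
    then have "Q / (Q + 1)\<^sup>2 \<le> 1" using \<open>0 \<le> Q\<close> by simp
    then show ?thesis
      using scale[of "Q + 1"] x \<open>0 \<le> Q\<close> by (auto simp: T_def ell2_def l2norm_def intro!: mem_Kball)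
  qed
  moreover have "bdd_below T" unfolding T_def by (rule bdd_belowI[of _ 0]) auto
  moreover have "Inf T < 2" using knorm by (simp add: knorm_def T_def)
  ultimately obtain t where "t \<in> T" "t < 2" using cInf_less_iff by (metis empty_iff)
  then have t: "0 < t" "t < 2" and "Q / t\<^sup>2 \<le> 6"
    using Kball_sum_squares_le[of "\<lambda>j. x j / t"] scale[of t] by (auto simp: T_def)
  then have "Q \<le> 6 * t\<^sup>2" by (simp add: divide_le_eq)
  also have "\<dots> \<le> 24" using power_strict_mono[of t 2 2] t by simp
  finally show ?thesis by (simp add: Q_def)
qed

lemma B_Y_sum_squares_le:
  assumes "x \<in> B_Y"
  shows "summable (\<lambda>j. (x j)\<^sup>2)" "(\<Sum>j. (x j)\<^sup>2) \<le> 24"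
  using assms knorm_le_one_sum_squares_le by (auto simp: B_Y_def ynorm_def ell2_def)

lemma B_Y_coordinate_bounds:
  assumes "x \<in> B_Y"
  shows "x 0 = 0" "\<And>m. m \<ge> 2 \<Longrightarrow> \<bar>x 1 - 2 * x m\<bar> \<le> 1" "x 1 \<le> 1"
proof -
  show "x 0 = 0" using assms by (simp add: B_Y_def ell2_def)
  have lim: "x \<longlonglongrightarrow> 0"
    using summable_square_imp_LIMSEQ_zero assms by (simp add: B_Y_def ell2_def)
  then obtain K where K: "\<And>n. \<bar>x n\<bar> \<le> K"
    using convergent_imp_Bseq[OF convergentI[OF lim]] BseqE real_norm_def by metis
  have "bdd_above ((\<lambda>n. \<bar>x 1 - 2 * x n\<bar>) ` {2..})"
    by (rule bdd_aboveI2[of _ _ "\<bar>x 1\<bar> + 2 * K"]) (use K in \<open>smt (verit)\<close>)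
  moreover have "(SUP n\<in>{2..}. \<bar>x 1 - 2 * x n\<bar>) \<le> 1" using assms by (simp add: B_Y_def ynorm_def)
  ultimately show slab: "\<bar>x 1 - 2 * x m\<bar> \<le> 1" if "m \<ge> 2" for m
    using cSUP_upper[of m "{2..}"] that by fastforce
  have "(\<lambda>n. x 1 - 2 * x n) \<longlonglongrightarrow> x 1 - 2 * 0" by (intro tendsto_intros lim)
  then have "(\<lambda>n. x 1 - 2 * x n) \<longlonglongrightarrow> x 1" by simp
  then show "x 1 \<le> 1"
    by (rule LIMSEQ_le_const2) (use slab abs_le_iff in \<open>auto intro!: exI[of _ 2]\<close>)
qed

lemma mem_B_YI:
  assumes "x \<in> Kball" "\<And>m. m \<ge> 2 \<Longrightarrow> \<bar>x 1 - 2 * x m\<bar> \<le> 1"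
  shows "x \<in> B_Y"
proof -
  have "(SUP n\<in>{2..}. \<bar>x 1 - 2 * x n\<bar>) \<le> 1"
    by (rule cSUP_least) (use assms(2) in auto)
  moreover have "x \<in> ell2" using assms(1) by (simp add: Kball_def l2_closure_def)
  ultimately show ?thesis using knorm_le_one[OF assms(1)] by (simp add: B_Y_def ynorm_def)
qed

lemma e_1_in_B_Y: "e 1 \<in> B_Y"
proof (rule mem_B_YI)
  have "l2norm (e 1) = 1"
    using summable_square_finite_support(2)[of "{1}" "e 1"] by (simp add: l2norm_def unitvec_def)
  moreover have "e 1 \<in> ell2" by (rule ell2_finite_support[of _ "{1}"]) (auto simp: unitvec_def)
  ultimately show "e 1 \<in> Kball" by (simp add: mem_Kball)
qed (simp add: unitvec_def)

lemma e_1_plus_e_n_in_B_Y: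
  assumes "n \<ge> 2"
  shows "(\<lambda>j. e 1 j + e n j) \<in> B_Y"
proof (rule mem_B_YI)
  have "(\<lambda>j. e 1 j + e n j) \<in> {(\<lambda>j. s * (e 1 j + e n j)) | s n. s \<in> {1, -1} \<and> n \<ge> 2}"
    using assms by force
  moreover have "(\<lambda>j. e 1 j + e n j) \<in> ell2"
    by (rule ell2_finite_support[of _ "{1, n}"]) (use assms in \<open>auto simp: unitvec_def\<close>)
  ultimately show "(\<lambda>j. e 1 j + e n j) \<in> Kball"
    unfolding Kball_def by (intro mem_l2_closure_seq_convex_hull) auto
qed (use assms in \<open>auto simp: unitvec_def\<close>)

lemma neg_half_e_n_in_B_Y:
  assumes "n \<ge> 2"
  shows "(\<lambda>j. - e n j / 2) \<in> B_Y"
proof (rule mem_B_YI)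
  have "(\<Sum>j. (- e n j / 2)\<^sup>2) = 1 / 4"
    using summable_square_finite_support(2)[of "{n}" "\<lambda>j. - e n j / 2"]
    by (simp add: unitvec_def power2_eq_square)
  then have "l2norm (\<lambda>j. - e n j / 2) \<le> 1"
    unfolding l2norm_def by simp
  moreover have "(\<lambda>j. - e n j / 2) \<in> ell2"
    by (rule ell2_finite_support[of _ "{n}"]) (use assms in \<open>auto simp: unitvec_def\<close>)
  ultimately show "(\<lambda>j. - e n j / 2) \<in> Kball" by (simp add: mem_Kball)
qed (use assms in \<open>auto simp: unitvec_def\<close>)

lemma pairing_le_one_if_mem_B_Ydual:
  assumes y: "y \<in> B_Ydual" and x: "x \<in> B_Y"
  shows "pairing y x \<le> 1"
proof -
  have sy: "summable (\<lambda>j. (y j)\<^sup>2)" using y by (simp add: B_Ydual_def ell2_def)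
  have "pairing y x' \<le> ((\<Sum>j. (y j)\<^sup>2) + 24) / 2" if "x' \<in> B_Y" for x'
    using pairing_le_half_sum_squares[OF sy B_Y_sum_squares_le(1)[OF that]]
      B_Y_sum_squares_le(2)[OF that] by simp
  then have "bdd_above ((\<lambda>x. pairing y x) ` B_Y)" by (rule bdd_aboveI2)
  then have "pairing y x \<le> ydualnorm y" unfolding ydualnorm_def by (rule cSUP_upper[OF x])
  then show ?thesis using y by (simp add: B_Ydual_def)
qed

lemma mem_B_YdualI:
  assumes "y \<in> ell2" "\<And>x. x \<in> B_Y \<Longrightarrow> pairing y x \<le> 1"
  shows "y \<in> B_Ydual"
proof -
  have "ydualnorm y \<le> 1"
    unfolding ydualnorm_def by (rule cSUP_least) (use e_1_in_B_Y assms(2) in auto)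
  then show ?thesis using assms(1) by (simp add: B_Ydual_def)
qed

lemma B_Ydual_coordinate_bounds:
  assumes "y \<in> B_Ydual"
  shows "y 0 = 0" "y 1 \<le> 1" "\<And>m. m \<ge> 2 \<Longrightarrow> y 1 + y m \<le> 1" "\<And>m. m \<ge> 2 \<Longrightarrow> -2 \<le> y m"
proof -
  show "y 0 = 0" using assms by (simp add: B_Ydual_def ell2_def)
  show "y 1 \<le> 1"
    using pairing_le_one_if_mem_B_Ydual[OF assms e_1_in_B_Y]
      pairing_finite_support[of "{1}" y "e 1"] by (simp add: unitvec_def)
  fix m :: nat assume m: "m \<ge> 2"
  show "y 1 + y m \<le> 1"
    using pairing_le_one_if_mem_B_Ydual[OF assms e_1_plus_e_n_in_B_Y[OF m]]
      pairing_finite_support[of "{1, m}" y "\<lambda>j. e 1 j + e m j"] m by (simp add: unitvec_def)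
  show "-2 \<le> y m"
    using pairing_le_one_if_mem_B_Ydual[OF assms neg_half_e_n_in_B_Y[OF m]]
      pairing_finite_support[of "{m}" y "\<lambda>j. - e m j / 2"] by (simp add: unitvec_def)
qed

lemma e_1_in_B_Ydual: "e 1 \<in> B_Ydual"
proof (rule mem_B_YdualI)
  show "e 1 \<in> ell2" by (rule ell2_finite_support[of _ "{1}"]) (auto simp: unitvec_def)
  fix x assume "x \<in> B_Y"
  then show "pairing (e 1) x \<le> 1"
    using B_Y_coordinate_bounds(3) pairing_finite_support[of "{1}" "e 1" x]
    by (simp add: unitvec_def)
qed

lemma e_1_minus_2_e_n_in_B_Ydual:
  assumes "n \<ge> 2"
  shows "(\<lambda>j. e 1 j - 2 * e n j) \<in> B_Ydual"
proof (rule mem_B_YdualI)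
  show "(\<lambda>j. e 1 j - 2 * e n j) \<in> ell2"
    by (rule ell2_finite_support[of _ "{1, n}"]) (use assms in \<open>auto simp: unitvec_def\<close>)
  fix x assume "x \<in> B_Y"
  then show "pairing (\<lambda>j. e 1 j - 2 * e n j) x \<le> 1"
    using B_Y_coordinate_bounds(2)[of x n] assms
      pairing_finite_support[of "{1, n}" "\<lambda>j. e 1 j - 2 * e n j" x]
    by (simp add: unitvec_def)
qed

lemma is_extreme_point_B_Y_if_0_1_on_face:
  assumes x: "x \<in> B_Y" "x 1 = 1" and vertex: "\<And>j. j \<ge> 2 \<Longrightarrow> x j = 0 \<or> x j = 1"
  shows "is_extreme_point x B_Y"
proof (rule is_extreme_point_coordinate_face[where k = 1 and lo = "\<lambda>_. 0"
      and hi = "\<lambda>j. if j = 0 then 0 else 1"])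
  fix a and j :: nat assume a: "a \<in> B_Y" "a 1 = x 1" and "j \<noteq> 1"
  then consider "j = 0" | "j \<ge> 2" by linarith
  then show "0 \<le> a j \<and> a j \<le> (if j = 0 then 0 else 1)"
    using B_Y_coordinate_bounds(1,2)[OF a(1)] a(2) x(2) by cases (auto simp: abs_le_iff)
next
  fix j :: nat assume "j \<noteq> 1"
  then consider "j = 0" | "j \<ge> 2" by linarith
  then show "x j = 0 \<or> x j = (if j = 0 then 0 else 1)"
    using B_Y_coordinate_bounds(1)[OF x(1)] vertex by cases auto
qed (use x B_Y_coordinate_bounds(3) in auto)

lemma is_extreme_point_B_Ydual_if_0_neg2_on_face:
  assumes y: "y \<in> B_Ydual" "y 1 = 1" and vertex: "\<And>j. j \<ge> 2 \<Longrightarrow> y j = 0 \<or> y j = -2"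
  shows "is_extreme_point y B_Ydual"
proof (rule is_extreme_point_coordinate_face[where k = 1 and lo = "\<lambda>j. if j = 0 then 0 else -2"
      and hi = "\<lambda>_. 0"])
  fix a and j :: nat assume a: "a \<in> B_Ydual" "a 1 = y 1" and "j \<noteq> 1"
  then consider "j = 0" | "j \<ge> 2" by linarith
  then show "(if j = 0 then 0 else -2) \<le> a j \<and> a j \<le> 0"
    using B_Ydual_coordinate_bounds(1,3,4)[OF a(1)] a(2) y(2) by cases auto
next
  fix j :: nat assume "j \<noteq> 1"
  then consider "j = 0" | "j \<ge> 2" by linarith
  then show "y j = (if j = 0 then 0 else -2) \<or> y j = 0"
    using B_Ydual_coordinate_bounds(1)[OF y(1)] vertex by cases auto
qed (use y B_Ydual_coordinate_bounds(2) in auto)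

theorem proposition3p5:
  shows "is_extreme_point (e 1) B_Y \<and>
         (\<forall>n\<ge>2. is_extreme_point (\<lambda>j. e 1 j + e n j) B_Y) \<and>
         is_extreme_point (e 1) B_Ydual \<and>
         (\<forall>n\<ge>2. is_extreme_point (\<lambda>j. e 1 j - 2 * e n j) B_Ydual)"
proof (intro conjI allI impI)
  show "is_extreme_point (e 1) B_Y"
    by (rule is_extreme_point_B_Y_if_0_1_on_face[OF e_1_in_B_Y]) (auto simp: unitvec_def)
  show "is_extreme_point (e 1) B_Ydual"
    by (rule is_extreme_point_B_Ydual_if_0_neg2_on_face[OF e_1_in_B_Ydual]) (auto simp: unitvec_def)
  fix n :: nat assume n: "n \<ge> 2"
  show "is_extreme_point (\<lambda>j. e 1 j + e n j) B_Y"
    by (rule is_extreme_point_B_Y_if_0_1_on_face[OF e_1_plus_e_n_in_B_Y[OF n]])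
      (use n in \<open>auto simp: unitvec_def\<close>)
  show "is_extreme_point (\<lambda>j. e 1 j - 2 * e n j) B_Ydual"
    by (rule is_extreme_point_B_Ydual_if_0_neg2_on_face[OF e_1_minus_2_e_n_in_B_Ydual[OF n]])
      (use n in \<open>auto simp: unitvec_def\<close>)
qed

end
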